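(* Under the standing assumptions (with $K\neq 0$), for $r\in[0,r_A)$ the matrix $I-\tilde A-rK$ is invertible and $M(r):=L[I-\tilde A-rK]^{-1}B$ satisfies: (i) $M(r)$ is entrywise strictly positive and depends continuously on $r$; (ii) for $0\le r_1<r_2<r_A$, $M(r_1)<M(r_2)$ entrywise strictly (every entry strictly increases); (iii) $r\mapsto\lambda_{\max}(M(r))$ is strictly increasing on $[0,r_A)$ and $\lambda_{\max}(M(r))\to+\infty$ as $r\to r_A^-$.
   Context: Fix $n\ge 2$. $A$ and $K$ are $n\times n$ entrywise nonnegative real matrices, with $K$ not the zero matrix; $\delta_1,\dots,\delta_n\in(0,1]$, $D=K\,\mathrm{diag}(\delta_1,\dots,\delta_n)$, and $\tilde A=A+D$. $L=\mathrm{diag}(l_1,\dots,l_n)$ with all $l_j>0$. $B$ is an $n\times n$ entrywise nonnegative matrix with no zero column. Standing assumption: $\tilde A$ is irreducible and $\lambda_{\max}(\tilde A)<1$, where $\lambda_{\max}(X)$ denotes the spectral radius of a square matrix $X$. $r_A>0$ denotes the (technical maximum) profit rate defined by $\lambda_{\max}(\tilde A+r_AK)=1$; for $r\in[0,r_A)$ one has $\lambda_{\max}(\tilde A+rK)<1$. *)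

theory Defs
  imports "HOL-Analysis.Analysis"
begin

definition cmat :: "real^'n^'n \<Rightarrow> complex^'n^'n" where
  "cmat X = (\<chi> i j. complex_of_real (X $ i $ j))"

definition spec_rad :: "real^'n^'n \<Rightarrow> real" where
  "spec_rad X = Max {cmod c | c. \<exists>v. v \<noteq> 0 \<and> cmat X *v v = c *s v}"

text \<open>Irreducibility of a square matrix: its associated digraph
  (edge i \<rightarrow> j iff X i j \<noteq> 0) is strongly connected.\<close>
definition irreducible_mat :: "real^'n^'n \<Rightarrow> bool" where
  "irreducible_mat X \<longleftrightarrow> (\<forall>i j. (i, j) \<in> {(p, q). X $ p $ q \<noteq> 0}\<^sup>+)"

definition diag_mat :: "(real^'n) \<Rightarrow> real^'n^'n" where
  "diag_mat d = (\<chi> i j. if i = j then d $ i else 0)"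

definition nonneg_mat :: "real^'n^'m \<Rightarrow> bool" where
  "nonneg_mat X \<longleftrightarrow> (\<forall>i j. 0 \<le> X $ i $ j)"

end

theory Submission
  imports Defs
begin

text \<open>
  Everything rests on the Perron--Frobenius theorem for a nonnegative irreducible matrix,
  obtained here from Brouwer's fixed point theorem: its spectral radius is an eigenvalue with
  positive left and right eigenvectors, and it strictly increases with the matrix. Writing
  \<open>P = A + K diag \<delta>\<close>, this gives \<open>spec_rad (P + r K) < 1\<close> for \<open>r < r\<^sub>A\<close>, so
  \<open>R(r) = (I - P - r K)\<^sup>-\<^sup>1\<close> exists and is entrywise positive. The resolvent identity
  \<open>R(s) - R(r) = (s - r) R(s) K R(r)\<close> makes \<open>R\<close>, and with it \<open>M(r) = L R(r) B\<close>, strictly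
  increasing entrywise, and the strict monotonicity of the spectral radius carries this over to
  \<open>spec_rad (M r)\<close>; continuity comes from Cramer's rule. Finally, if \<open>u\<close> is the Perron vector
  of \<open>P + r\<^sub>A K\<close>, then \<open>R(r) K u = u / (r\<^sub>A - r)\<close>, which drives the row sums of \<open>M(r)\<close>, and
  with them its spectral radius, to infinity.
\<close>

section \<open>Positive vectors and matrices\<close>

definition pos_vec :: "real^'n \<Rightarrow> bool" where
  "pos_vec x \<longleftrightarrow> (\<forall>i. 0 < x $ i)"

definition pos_mat :: "real^'n^'m \<Rightarrow> bool" where
  "pos_mat X \<longleftrightarrow> (\<forall>i j. 0 < X $ i $ j)"

lemma pos_vec_imp_nonneg: "pos_vec x \<Longrightarrow> 0 \<le> x"
  by (simp add: pos_vec_def less_eq_vec_def less_imp_le)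

lemma pos_vec_nonzero: "pos_vec x \<Longrightarrow> x \<noteq> 0"
  by (metis pos_vec_def less_irrefl zero_index)

lemma pos_vec_one: "pos_vec 1"
  by (simp add: pos_vec_def)

lemma pos_mat_imp_nonneg_mat: "pos_mat X \<Longrightarrow> nonneg_mat X"
  by (simp add: pos_mat_def nonneg_mat_def less_imp_le)

lemma nonneg_mat_mult: "nonneg_mat X \<Longrightarrow> nonneg_mat Y \<Longrightarrow> nonneg_mat (X ** Y)"
  unfolding nonneg_mat_def matrix_matrix_mult_def by (auto intro!: sum_nonneg)

lemma nonneg_mat_mult_vec_mono:
  "nonneg_mat X \<Longrightarrow> x \<le> y \<Longrightarrow> X *v x \<le> X *v y"
  unfolding nonneg_mat_def less_eq_vec_def matrix_vector_mult_def
  by (auto intro!: sum_mono mult_left_mono)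

lemma nonneg_mat_mult_vec_nonneg: "nonneg_mat X \<Longrightarrow> 0 \<le> x \<Longrightarrow> 0 \<le> X *v x"
  using nonneg_mat_mult_vec_mono[of X 0 x] by simp

lemma nonneg_mat_mult_vec_pos_component:
  assumes "nonneg_mat D" and "0 \<le> x" and "D $ a $ b \<noteq> 0" and "x $ b \<noteq> 0"
  shows "0 < (D *v x) $ a"
proof -
  have "0 < D $ a $ b * x $ b"
    using assms by (simp add: nonneg_mat_def less_eq_vec_def order_le_neq_trans)
  also have "\<dots> \<le> (D *v x) $ a"
    unfolding matrix_vector_mult_def using assms(1,2)
    by (auto simp: nonneg_mat_def less_eq_vec_def intro!: member_le_sum)
  finally show ?thesis .
qed

lemma nonneg_mat_mult_pos_vec_nonzero:
  assumes "nonneg_mat D" and "D \<noteq> 0" and "pos_vec v"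
  shows "D *v v \<noteq> 0"
proof -
  obtain a b where "D $ a $ b \<noteq> 0"
    using assms(2) by (metis vec_eq_iff zero_index)
  then have "0 < (D *v v) $ a"
    using assms by (intro nonneg_mat_mult_vec_pos_component)
      (auto simp: pos_vec_imp_nonneg pos_vec_def less_imp_neq[symmetric])
  then show ?thesis
    by auto
qed

lemma inner_mono_nonneg:
  fixes w :: "real^'n"
  shows "0 \<le> w \<Longrightarrow> x \<le> y \<Longrightarrow> inner w x \<le> inner w y"
  unfolding inner_vec_def less_eq_vec_def by (auto intro!: sum_mono mult_left_mono)

lemma inner_pos_vec_pos:
  assumes "pos_vec w" and "0 \<le> x" and "x \<noteq> 0"
  shows "0 < inner w x"
proof -
  obtain k where "x $ k \<noteq> 0"
    using assms(3) by (metis vec_eq_iff zero_index)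
  then have "0 < w $ k * x $ k"
    using assms(1,2) by (simp add: pos_vec_def less_eq_vec_def order_le_neq_trans)
  moreover have "\<forall>i. 0 \<le> w $ i * x $ i"
    using assms(1,2) by (simp add: pos_vec_def less_eq_vec_def less_imp_le)
  ultimately show ?thesis
    unfolding inner_vec_def by (intro sum_pos2[of UNIV k]) auto
qed

lemma inner_pos_vec_pos_vec: "pos_vec w \<Longrightarrow> pos_vec v \<Longrightarrow> 0 < inner w v"
  by (simp add: inner_pos_vec_pos pos_vec_imp_nonneg pos_vec_nonzero)

lemma exists_min_ratio:
  assumes "pos_vec v"
  obtains i0 where "(x $ i0 / v $ i0) *\<^sub>R v \<le> x"
proof -
  obtain i0 where "is_arg_min (\<lambda>i. x $ i / v $ i) (\<lambda>i. i \<in> UNIV) i0"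
    using ex_is_arg_min_if_finite[of UNIV "\<lambda>i. x $ i / v $ i"] by auto
  then have "\<forall>i. x $ i0 / v $ i0 \<le> x $ i / v $ i"
    by (simp add: is_arg_min_linorder)
  then show ?thesis
    using that assms by (simp add: less_eq_vec_def pos_vec_def pos_le_divide_eq)
qed

lemma pos_vec_ge_scaled:
  assumes "pos_vec x" and "pos_vec v"
  obtains \<beta> where "0 < \<beta>" and "\<beta> *\<^sub>R v \<le> x"
  using exists_min_ratio[OF assms(2), of x] assms that by (metis divide_pos_pos pos_vec_def)

lemma pos_mat_mult_vec:
  assumes "pos_mat X" and "0 \<le> y" and "y \<noteq> 0"
  shows "pos_vec (X *v y)"
proof -
  have "(X *v y) $ i = inner (X $ i) y" for i
    by (simp add: matrix_vector_mult_def inner_vec_def)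
  moreover have "0 < inner (X $ i) y" for i
    using assms(1) by (intro inner_pos_vec_pos assms(2,3)) (simp add: pos_mat_def pos_vec_def)
  ultimately show ?thesis
    by (simp add: pos_vec_def)
qed

lemma pos_mat_mult:
  assumes "pos_mat X" and "nonneg_mat Y" and "\<forall>j. \<exists>i. Y $ i $ j \<noteq> 0"
  shows "pos_mat (X ** Y)"
proof -
  have "(X ** Y) $ i $ j = (X *v column j Y) $ i" for i j
    by (simp add: matrix_matrix_mult_def matrix_vector_mult_def column_def)
  moreover have "0 \<le> column j Y" and "column j Y \<noteq> 0" for j
    using assms(2,3) by (auto simp: nonneg_mat_def less_eq_vec_def column_def vec_eq_iff)
  ultimately show ?thesis
    using pos_mat_mult_vec[OF assms(1)] by (simp add: pos_mat_def pos_vec_def)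
qed

lemma pos_mat_mult_mult:
  assumes "pos_mat X" and "nonneg_mat K" and "K \<noteq> 0" and "pos_mat Y"
  shows "pos_mat (X ** K ** Y)"
proof -
  have "column j (K ** Y) = K *v column j Y" for j
    by (simp add: matrix_matrix_mult_def matrix_vector_mult_def column_def)
  moreover have "pos_vec (column j Y)" for j
    using assms(4) by (simp add: pos_mat_def pos_vec_def column_def)
  ultimately have "\<forall>j. \<exists>i. (K ** Y) $ i $ j \<noteq> 0"
    using nonneg_mat_mult_pos_vec_nonzero[OF assms(2,3)]
    by (metis column_def vec_eq_iff vec_lambda_beta zero_index)
  then have "pos_mat (X ** (K ** Y))"
    using pos_mat_mult[OF assms(1)] nonneg_mat_mult[OF assms(2) pos_mat_imp_nonneg_mat[OF assms(4)]]
    by blast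
  then show ?thesis
    by (simp add: matrix_mul_assoc)
qed

lemma diag_mat_mult: "(diag_mat d ** X) $ i $ j = d $ i * X $ i $ j"
  by (simp add: diag_mat_def matrix_matrix_mult_def if_distrib if_distribR cong: if_cong)

lemma diag_mat_mult_vec: "diag_mat d *v x = (\<chi> i. d $ i * x $ i)"
  by (simp add: diag_mat_def matrix_vector_mult_def vec_eq_iff if_distrib if_distribR cong: if_cong)

lemma pos_mat_diag_mult_mult:
  assumes "pos_vec l" and "pos_mat X" and "nonneg_mat B" and "\<forall>j. \<exists>i. B $ i $ j \<noteq> 0"
  shows "pos_mat (diag_mat l ** X ** B)"
  using pos_mat_mult[OF assms(2-4)] assms(1)
  by (simp add: pos_mat_def pos_vec_def diag_mat_mult flip: matrix_mul_assoc)

section \<open>Inverse matrices\<close>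

lemma matrix_mul_matrix_inv:
  fixes X :: "'a::field^'n^'n"
  assumes "invertible X"
  shows "X ** matrix_inv X = mat 1" and "matrix_inv X ** X = mat 1"
proof -
  have "\<exists>Y. X ** Y = mat 1 \<and> Y ** X = mat 1"
    using assms by (simp add: invertible_def)
  then have "X ** matrix_inv X = mat 1 \<and> matrix_inv X ** X = mat 1"
    unfolding matrix_inv_def by (rule someI_ex)
  then show "X ** matrix_inv X = mat 1" and "matrix_inv X ** X = mat 1"
    by auto
qed

lemma matrix_diff_ldistrib: "(X :: 'a::ring_1^'n^'m) ** (Y - Z) = X ** Y - X ** Z"
  by (simp add: matrix_matrix_mult_def vec_eq_iff sum_subtractf algebra_simps)

lemma matrix_diff_rdistrib: "((Y :: 'a::ring_1^'n^'m) - Z) ** X = Y ** X - Z ** X"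
  by (simp add: matrix_matrix_mult_def vec_eq_iff sum_subtractf algebra_simps)

lemma matrix_inv_diff:
  fixes X Y :: "'a::field^'n^'n"
  assumes "invertible X" and "invertible Y"
  shows "matrix_inv Y - matrix_inv X = matrix_inv Y ** (X - Y) ** matrix_inv X"
proof -
  have "matrix_inv Y ** (X - Y) ** matrix_inv X
      = matrix_inv Y ** (X ** matrix_inv X) - (matrix_inv Y ** Y) ** matrix_inv X"
    by (simp add: matrix_diff_ldistrib matrix_diff_rdistrib matrix_mul_assoc)
  then show ?thesis
    by (simp add: matrix_mul_matrix_inv assms)
qed

lemma continuous_on_det:
  fixes f :: "'a::topological_space \<Rightarrow> real^'n^'n"
  shows "continuous_on S f \<Longrightarrow> continuous_on S (\<lambda>x. det (f x))"
  unfolding det_def by (intro continuous_intros)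

lemma matrix_inv_Cramer:
  fixes X :: "real^'n^'n"
  assumes "invertible X"
  shows "matrix_inv X $ i $ k = det (\<chi> a b. if b = i then axis k 1 $ a else X $ a $ b) / det X"
proof -
  have "X *v (matrix_inv X *v axis k 1) = axis k 1"
    by (simp add: matrix_vector_mul_assoc matrix_mul_matrix_inv(1)[OF assms])
  then have "matrix_inv X *v axis k 1 = (\<chi> i. det (\<chi> a b. if b = i then axis k 1 $ a else X $ a $ b) / det X)"
    by (rule cramer[THEN iffD1, rotated]) (use assms invertible_det_nz in blast)
  then have "column k (matrix_inv X) $ i = det (\<chi> a b. if b = i then axis k 1 $ a else X $ a $ b) / det X"
    by (simp only: matrix_vector_mult_basis vec_lambda_beta)
  then show ?thesis
    by (simp only: column_def vec_lambda_beta)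
qed

lemma continuous_on_matrix_inv:
  "continuous_on {X :: real^'n^'n. invertible X} matrix_inv"
proof -
  have "continuous_on {X :: real^'n^'n. invertible X}
      (\<lambda>X. det (\<chi> a b. if b = i then axis k 1 $ a else X $ a $ b) / det X)" for i k
  proof (intro continuous_intros continuous_on_det)
    show "continuous_on {X. invertible X} (\<lambda>X::real^'n^'n. if b = i then axis k 1 $ a else X $ a $ b)"
      for a b by (cases "b = i") (auto intro!: continuous_on_component)
  qed (simp add: invertible_det_nz)
  then have "continuous_on {X :: real^'n^'n. invertible X}
      (\<lambda>X. \<chi> i k. det (\<chi> a b. if b = i then axis k 1 $ a else X $ a $ b) / det X)"
    by (intro continuous_on_vec_lambda)
  then show ?thesis
    by (rule continuous_on_eq) (simp add: vec_eq_iff matrix_inv_Cramer)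
qed

lemma continuous_on_matrix_mult:
  fixes f :: "'a::topological_space \<Rightarrow> real^'n^'m" and g :: "'a \<Rightarrow> real^'k^'n"
  shows "continuous_on S f \<Longrightarrow> continuous_on S g \<Longrightarrow> continuous_on S (\<lambda>x. f x ** g x)"
  unfolding matrix_matrix_mult_def by (intro continuous_intros)

section \<open>Irreducible matrices\<close>

lemma irreducible_mat_mono:
  assumes "nonneg_mat P" and "P \<le> Q" and "irreducible_mat P"
  shows "irreducible_mat Q"
proof -
  have "{(p, q). P $ p $ q \<noteq> 0} \<subseteq> {(p, q). Q $ p $ q \<noteq> 0}"
    using assms(1,2) by (auto simp: nonneg_mat_def less_eq_vec_def) (metis order.antisym)
  then show ?thesis
    using assms(3) trancl_mono unfolding irreducible_mat_def by blast
qed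

lemma pos_mat_irreducible: "pos_mat X \<Longrightarrow> irreducible_mat X"
  unfolding pos_mat_def irreducible_mat_def
  by (metis (mono_tags) case_prodI less_irrefl mem_Collect_eq r_into_trancl')

lemma irreducible_mat_transpose: "irreducible_mat P \<Longrightarrow> irreducible_mat (transpose P)"
proof -
  have "{(p, q). transpose P $ p $ q \<noteq> 0} = {(p, q). P $ p $ q \<noteq> 0}\<inverse>"
    by (auto simp: transpose_def)
  then show "irreducible_mat P \<Longrightarrow> irreducible_mat (transpose P)"
    unfolding irreducible_mat_def by (simp add: trancl_converse)
qed

lemma irreducible_mat_column_nonzero:
  assumes "irreducible_mat P"
  shows "\<exists>i. P $ i $ j \<noteq> 0"
proof -
  have "(j, j) \<in> {(p, q). P $ p $ q \<noteq> 0}\<^sup>+"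
    using assms by (simp add: irreducible_mat_def)
  then obtain i where "(i, j) \<in> {(p, q). P $ p $ q \<noteq> 0}"
    by (blast elim: tranclE)
  then show ?thesis
    by blast
qed

lemma pos_vec_if_subinvariant:
  assumes P: "nonneg_mat P" "irreducible_mat P"
    and x: "0 \<le> x" "x \<noteq> 0" and sub: "P *v x \<le> c *\<^sub>R x"
  shows "pos_vec x"
proof -
  have zero_closed: "x $ q = 0" if "(p, q) \<in> {(p, q). P $ p $ q \<noteq> 0}" "x $ p = 0" for p q
  proof -
    have "(\<Sum>j\<in>UNIV. P $ p $ j * x $ j) \<le> 0"
      using sub that(2) by (simp add: less_eq_vec_def matrix_vector_mult_def) (metis mult_zero_right)
    moreover have "\<forall>j. 0 \<le> P $ p $ j * x $ j"
      using P(1) x(1) by (simp add: nonneg_mat_def less_eq_vec_def)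
    ultimately have "P $ p $ q * x $ q = 0"
      by (metis (no_types, lifting) UNIV_I antisym finite sum_nonneg sum_nonneg_eq_0_iff)
    then show ?thesis
      using that(1) by simp
  qed
  have zero_propagates: "x $ q = 0" if "(p, q) \<in> {(p, q). P $ p $ q \<noteq> 0}\<^sup>+" "x $ p = 0" for p q
    using that by (induction rule: trancl_induct) (auto intro: zero_closed)
  obtain j where j: "x $ j \<noteq> 0"
    using x(2) by (metis vec_eq_iff zero_index)
  have "x $ i \<noteq> 0" for i
  proof
    assume "x $ i = 0"
    moreover have "(i, j) \<in> {(p, q). P $ p $ q \<noteq> 0}\<^sup>+"
      using P(2) by (simp add: irreducible_mat_def)
    ultimately have "x $ j = 0"
      by (rule zero_propagates[rotated])
    then show False
      using j by simp
  qed
  then show ?thesis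
    using x(1) by (simp add: pos_vec_def less_eq_vec_def order_le_neq_trans)
qed

section \<open>The Perron--Frobenius theorem\<close>

lemma eigenvectors_independent:
  fixes X :: "'a::field^'n^'n"
  assumes "finite C" and "\<forall>c\<in>C. e c \<noteq> 0 \<and> X *v e c = c *s e c"
    and "(\<Sum>c\<in>C. a c *s e c) = 0"
  shows "\<forall>c\<in>C. a c = 0"
  using assms
proof (induction C arbitrary: a rule: finite_induct)
  case empty
  then show ?case by simp
next
  case (insert c0 C)
  have sum: "a c0 *s e c0 + (\<Sum>c\<in>C. a c *s e c) = 0"
    using insert by simp
  have "X *v (a c0 *s e c0 + (\<Sum>c\<in>C. a c *s e c)) = 0"
    using sum by simp
  then have image: "(a c0 * c0) *s e c0 + (\<Sum>c\<in>C. (a c * c) *s e c) = 0"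
    using insert.prems(1) by (simp add: vec.add vec.sum vec.scale)
  \<comment> \<open>subtracting c0 times the relation kills the term of e c0\<close>
  have "(\<Sum>c\<in>C. (a c * (c - c0)) *s e c)
      = (\<Sum>c\<in>C. (a c * c) *s e c) - c0 *s (\<Sum>c\<in>C. a c *s e c)"
    by (simp add: algebra_simps sum_subtractf vec.scale_sum_right)
  also have "\<dots> = 0"
  proof -
    have "(\<Sum>c\<in>C. a c *s e c) = - (a c0 *s e c0)"
      using sum by (simp add: eq_neg_iff_add_eq_0 add.commute)
    moreover have "(\<Sum>c\<in>C. (a c * c) *s e c) = - ((a c0 * c0) *s e c0)"
      using image by (simp add: eq_neg_iff_add_eq_0 add.commute)
    ultimately show ?thesis
      by (simp add: mult.commute)
  qed
  finally have "\<forall>c\<in>C. a c * (c - c0) = 0"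
    using insert.IH[of "\<lambda>c. a c * (c - c0)"] insert.prems(1) by blast
  then have "\<forall>c\<in>C. a c = 0"
    using insert.hyps(2) by auto
  moreover from this have "a c0 = 0"
    using sum insert.prems(1) by simp
  ultimately show ?case
    by simp
qed

lemma finite_eigenvalues:
  fixes X :: "'a::field^'n^'n"
  shows "finite {c. \<exists>v. v \<noteq> 0 \<and> X *v v = c *s v}" (is "finite ?E")
proof (rule ccontr)
  assume "infinite ?E"
  then obtain C where C: "finite C" "card C = Suc CARD('n)" "C \<subseteq> ?E"
    using infinite_arbitrarily_large by blast
  define e where "e c = (SOME v. v \<noteq> 0 \<and> X *v v = c *s v)" for c
  have e: "\<forall>c\<in>C. e c \<noteq> 0 \<and> X *v e c = c *s e c"
    using C(3) unfolding e_def by (metis (mono_tags, lifting) mem_Collect_eq subsetD)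
  have inj: "inj_on e C"
  proof (rule inj_onI)
    fix c d assume "c \<in> C" "d \<in> C" "e c = e d"
    then have "c *s e c = d *s e c" and "e c \<noteq> 0"
      using e by metis+
    then have "(c - d) *s e c = 0" and "e c \<noteq> 0"
      by simp_all
    then show "c = d"
      by simp
  qed
  have "vec.independent (e ` C)"
    unfolding vec.independent_explicit
  proof (intro conjI allI impI ballI)
    fix g v assume g: "(\<Sum>v\<in>e ` C. g v *s v) = 0" and v: "v \<in> e ` C"
    have "(\<Sum>c\<in>C. g (e c) *s e c) = 0"
      using g by (simp add: sum.reindex[OF inj])
    then show "g v = 0"
      using eigenvectors_independent[OF C(1) e, of "\<lambda>c. g (e c)"] v by blast
  qed (use C(1) in simp)
  then have "card (e ` C) \<le> vec.dim (e ` C)"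
    using vec.independent_bound_general by blast
  also have "\<dots> \<le> vec.dim (UNIV :: ('a^'n) set)"
    by (rule vec.dim_subset) simp
  also have "\<dots> = CARD('n)"
    by (rule vec_dim_card)
  finally show False
    using C(2) card_image[OF inj] by simp
qed

lemma nonneg_eigenvector_exists:
  fixes P :: "real^'n^'n"
  assumes P: "nonneg_mat P" and col: "\<forall>j. \<exists>i. P $ i $ j \<noteq> 0"
  shows "\<exists>x \<mu>. 0 \<le> x \<and> x \<noteq> 0 \<and> 0 < \<mu> \<and> P *v x = \<mu> *\<^sub>R x"
proof -
  define S where "S = {x :: real^'n. 0 \<le> x \<and> sum (($) x) UNIV = 1}"
  define \<sigma> where "\<sigma> x = sum (($) (P *v x)) UNIV" for x
  have \<sigma>_pos: "0 < \<sigma> x" if "x \<in> S" for x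
  proof -
    have x: "0 \<le> x" "x \<noteq> 0"
      using that by (auto simp: S_def)
    obtain b where b: "x $ b \<noteq> 0"
      using x(2) by (metis vec_eq_iff zero_index)
    obtain a where "P $ a $ b \<noteq> 0"
      using col by blast
    then have "P *v x \<noteq> 0"
      using nonneg_mat_mult_vec_pos_component[OF P x(1) _ b] by force
    then have "0 < inner 1 (P *v x)"
      using inner_pos_vec_pos[OF pos_vec_one] nonneg_mat_mult_vec_nonneg[OF P x(1)] by blast
    then show ?thesis
      by (simp add: \<sigma>_def inner_vec_def)
  qed
  have "compact S"
  proof -
    have "S \<subseteq> cbox 0 1"
    proof
      fix x assume x: "x \<in> S"
      then have "x $ i \<le> sum (($) x) UNIV" for i
        by (intro member_le_sum) (auto simp: S_def less_eq_vec_def)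
      then show "x \<in> cbox 0 1"
        using x by (simp add: S_def mem_box_cart less_eq_vec_def)
    qed
    moreover have "closed S"
      unfolding S_def less_eq_vec_def
      by (intro closed_Collect_conj closed_Collect_all closed_Collect_le closed_Collect_eq
          continuous_intros)
    ultimately show ?thesis
      by (meson bounded_cbox bounded_subset compact_eq_bounded_closed)
  qed
  moreover have "convex S"
    unfolding convex_def S_def
    by (auto simp: sum.distrib less_eq_vec_def simp flip: sum_distrib_left)
  moreover have "S \<noteq> {}"
  proof -
    have "(\<chi> i. 1 / real CARD('n)) \<in> S"
      by (simp add: S_def less_eq_vec_def)
    then show ?thesis by blast
  qed
  moreover have "continuous_on S (\<lambda>x. (1 / \<sigma> x) *\<^sub>R (P *v x))"
    using \<sigma>_pos unfolding \<sigma>_def by (intro continuous_intros) force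
  moreover have "(\<lambda>x. (1 / \<sigma> x) *\<^sub>R (P *v x)) \<in> S \<rightarrow> S"
  proof
    fix x assume x: "x \<in> S"
    then have "0 \<le> P *v x"
      by (simp add: S_def nonneg_mat_mult_vec_nonneg[OF P])
    then show "(1 / \<sigma> x) *\<^sub>R (P *v x) \<in> S"
      using \<sigma>_pos[OF x] by (simp add: S_def \<sigma>_def less_eq_vec_def flip: sum_divide_distrib)
  qed
  ultimately obtain x where x: "x \<in> S" "(1 / \<sigma> x) *\<^sub>R (P *v x) = x"
    by (rule brouwer)
  then have "P *v x = \<sigma> x *\<^sub>R x"
    using \<sigma>_pos[OF x(1)] by (metis eq_vector_fraction_iff less_irrefl scaleR_one)
  moreover have "0 \<le> x" "x \<noteq> 0"
    using x(1) by (auto simp: S_def)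
  ultimately show ?thesis
    using \<sigma>_pos[OF x(1)] by blast
qed

lemma perron_eigenvector:
  assumes "nonneg_mat P" and "irreducible_mat P"
  shows "\<exists>v \<mu>. pos_vec v \<and> 0 < \<mu> \<and> P *v v = \<mu> *\<^sub>R v"
proof -
  obtain v \<mu> where v: "0 \<le> v" "v \<noteq> 0" "0 < \<mu>" "P *v v = \<mu> *\<^sub>R v"
    using nonneg_eigenvector_exists[OF assms(1)] irreducible_mat_column_nonzero[OF assms(2)] by blast
  then have "pos_vec v"
    using pos_vec_if_subinvariant[OF assms, of v \<mu>] by simp
  with v show ?thesis
    by blast
qed

lemma eigenvalue_cmod_le:
  assumes P: "nonneg_mat P" and w: "pos_vec w" "w v* P = \<mu> *\<^sub>R w"
    and z: "z \<noteq> 0" "cmat P *v z = c *s z"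
  shows "cmod c \<le> \<mu>"
proof -
  define a where "a = (\<chi> i. cmod (z $ i))"
  have "cmod c * a $ i \<le> (P *v a) $ i" for i
  proof -
    have "c * z $ i = (\<Sum>j\<in>UNIV. complex_of_real (P $ i $ j) * z $ j)"
      using z(2) by (simp add: vec_eq_iff matrix_vector_mult_def cmat_def)
    then have "cmod c * a $ i = cmod (\<Sum>j\<in>UNIV. complex_of_real (P $ i $ j) * z $ j)"
      by (metis a_def norm_mult vec_lambda_beta)
    also have "\<dots> \<le> (\<Sum>j\<in>UNIV. cmod (complex_of_real (P $ i $ j) * z $ j))"
      by (rule norm_sum)
    also have "\<dots> = (P *v a) $ i"
      using P by (simp add: a_def matrix_vector_mult_def nonneg_mat_def norm_mult)
    finally show ?thesis .
  qed
  then have "cmod c * inner w a \<le> inner w (P *v a)"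
    using inner_mono_nonneg[OF pos_vec_imp_nonneg[OF w(1)], of "cmod c *\<^sub>R a" "P *v a"]
    by (simp add: less_eq_vec_def)
  also have "\<dots> = \<mu> * inner w a"
    by (simp flip: dot_lmul_matrix add: w(2))
  finally show ?thesis
    using z(1) w(1) inner_pos_vec_pos[of w a]
    by (simp add: a_def less_eq_vec_def vec_eq_iff)
qed

lemma cmat_eigenvector:
  assumes "P *v v = \<mu> *\<^sub>R v"
  shows "cmat P *v (\<chi> i. complex_of_real (v $ i)) = complex_of_real \<mu> *s (\<chi> i. complex_of_real (v $ i))"
proof -
  have "(\<Sum>j\<in>UNIV. P $ i $ j * v $ j) = \<mu> * v $ i" for i
    using assms by (simp add: vec_eq_iff matrix_vector_mult_def)
  then show ?thesis
    by (simp add: vec_eq_iff cmat_def matrix_vector_mult_def flip: of_real_mult of_real_sum)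
qed

theorem perron_frobenius:
  assumes P: "nonneg_mat P" "irreducible_mat P"
  obtains v w where "pos_vec v" and "pos_vec w" and "P *v v = spec_rad P *\<^sub>R v"
    and "w v* P = spec_rad P *\<^sub>R w" and "0 < spec_rad P"
proof -
  obtain v \<mu> where v: "pos_vec v" "0 < \<mu>" "P *v v = \<mu> *\<^sub>R v"
    using perron_eigenvector[OF P] by blast
  have "nonneg_mat (transpose P)"
    using P(1) by (simp add: nonneg_mat_def transpose_def)
  then obtain w \<mu>' where w: "pos_vec w" "w v* P = \<mu>' *\<^sub>R w"
    using perron_eigenvector irreducible_mat_transpose[OF P(2)] by fastforce
  \<comment> \<open>pairing the left and the right eigenvector forces the two eigenvalues to agree\<close>
  have "\<mu>' * inner w v = \<mu> * inner w v"
    using dot_lmul_matrix[of w P v] v(3) w(2) by simp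
  then have w': "w v* P = \<mu> *\<^sub>R w"
    using w inner_pos_vec_pos_vec[OF w(1) v(1)] by simp
  have "spec_rad P = \<mu>"
    unfolding spec_rad_def
  proof (rule Max_eqI)
    show "finite {cmod c |c. \<exists>z. z \<noteq> 0 \<and> cmat P *v z = c *s z}"
      using finite_eigenvalues[of "cmat P"] by (simp add: setcompr_eq_image)
    show "s \<le> \<mu>" if "s \<in> {cmod c |c. \<exists>z. z \<noteq> 0 \<and> cmat P *v z = c *s z}" for s
      using that eigenvalue_cmod_le[OF P(1) w(1) w'] by blast
    have "(\<chi> i. complex_of_real (v $ i)) \<noteq> 0"
      using pos_vec_nonzero[OF v(1)] by (simp add: vec_eq_iff)
    then show "\<mu> \<in> {cmod c |c. \<exists>z. z \<noteq> 0 \<and> cmat P *v z = c *s z}"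
      using cmat_eigenvector[OF v(3)] v(2) by force
  qed
  then show ?thesis
    using that v w(1) w' by simp
qed

lemma spec_rad_strict_mono:
  assumes P: "nonneg_mat P" "irreducible_mat P" and "P \<le> Q" and "P \<noteq> Q"
  shows "spec_rad P < spec_rad Q"
proof -
  have Q: "nonneg_mat Q" "irreducible_mat Q"
    using assms irreducible_mat_mono[OF P(1)]
    by (auto simp: nonneg_mat_def less_eq_vec_def) (meson order_trans)
  have D: "nonneg_mat (Q - P)" "Q - P \<noteq> 0"
    using assms by (auto simp: nonneg_mat_def less_eq_vec_def)
  obtain v where v: "pos_vec v" "Q *v v = spec_rad Q *\<^sub>R v"
    using perron_frobenius[OF Q] by blast
  obtain w where w: "pos_vec w" "w v* P = spec_rad P *\<^sub>R w"
    using perron_frobenius[OF P] by blast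
  have "0 < inner w ((Q - P) *v v)"
    using w(1) nonneg_mat_mult_vec_nonneg[OF D(1) pos_vec_imp_nonneg[OF v(1)]]
      nonneg_mat_mult_pos_vec_nonzero[OF D v(1)] by (rule inner_pos_vec_pos)
  also have "inner w ((Q - P) *v v) = (spec_rad Q - spec_rad P) * inner w v"
    by (simp add: v(2) algebra_simps
        flip: dot_lmul_matrix add: w(2))
  finally show ?thesis
    using inner_pos_vec_pos_vec[OF w(1) v(1)]
    by (simp add: zero_less_mult_iff)
qed

lemma spec_rad_strict_mono_pos:
  assumes "pos_mat X" and "pos_mat (Y - X)"
  shows "spec_rad X < spec_rad Y"
proof (rule spec_rad_strict_mono)
  show "nonneg_mat X" and "irreducible_mat X"
    using assms(1) by (simp_all add: pos_mat_imp_nonneg_mat pos_mat_irreducible)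
  show "X \<le> Y" and "X \<noteq> Y"
    using assms(2) by (auto simp: pos_mat_def less_eq_vec_def less_imp_le)
qed

lemma spec_rad_ge:
  assumes X: "nonneg_mat X" "irreducible_mat X" and v: "pos_vec v" "\<alpha> *\<^sub>R v \<le> X *v v"
  shows "\<alpha> \<le> spec_rad X"
proof -
  obtain w where w: "pos_vec w" "w v* X = spec_rad X *\<^sub>R w"
    using perron_frobenius[OF X] by blast
  have "\<alpha> * inner w v \<le> inner w (X *v v)"
    using inner_mono_nonneg[OF pos_vec_imp_nonneg[OF w(1)] v(2)] by simp
  also have "\<dots> = spec_rad X * inner w v"
    by (simp flip: dot_lmul_matrix add: w(2))
  finally show ?thesis
    using inner_pos_vec_pos_vec[OF w(1) v(1)] by simp
qed

section \<open>Inverse positivity\<close>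

lemma nonneg_if_one_minus_mult_nonneg:
  assumes P: "nonneg_mat P" and v: "pos_vec v" "P *v v = \<mu> *\<^sub>R v" and "\<mu> < 1"
    and "0 \<le> (mat 1 - P) *v x"
  shows "0 \<le> x"
proof -
  \<comment> \<open>with \<open>t v\<close> the largest multiple of \<open>v\<close> below \<open>x\<close>, \<open>x \<ge> P x \<ge> t \<mu> v\<close> at the touching
    coordinate forces \<open>t \<ge> t \<mu>\<close>, i.e. \<open>t \<ge> 0\<close>\<close>
  obtain i0 where t: "(x $ i0 / v $ i0) *\<^sub>R v \<le> x" (is "?t *\<^sub>R v \<le> x")
    using exists_min_ratio[OF v(1)] by blast
  have "(?t * \<mu>) *\<^sub>R v \<le> P *v x"
    using nonneg_mat_mult_vec_mono[OF P t] v(2) by (simp add: matrix_vector_mult_scaleR)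
  also have "P *v x \<le> x"
    using assms(5) by (simp add: matrix_vector_mult_diff_rdistrib less_eq_vec_def)
  finally have "((?t * \<mu>) *\<^sub>R v) $ i0 \<le> x $ i0"
    unfolding less_eq_vec_def by blast
  then have "?t * \<mu> * v $ i0 \<le> x $ i0"
    by (simp only: vector_scaleR_component real_scaleR_def)
  also have "x $ i0 = ?t * v $ i0"
    using v(1) by (simp add: pos_vec_def less_imp_neq[symmetric])
  finally have "0 \<le> ?t * ((1 - \<mu>) * v $ i0)"
    by (simp add: algebra_simps)
  moreover have "0 < (1 - \<mu>) * v $ i0"
    using v(1) \<open>\<mu> < 1\<close> by (simp add: pos_vec_def)
  ultimately have "0 \<le> ?t"
    by (meson mult_neg_pos not_le)
  then show ?thesis
    using t pos_vec_imp_nonneg[OF v(1)] by (meson order_trans scaleR_nonneg_nonneg)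
qed

lemma inverse_one_minus_pos:
  assumes P: "nonneg_mat P" "irreducible_mat P" and "spec_rad P < 1"
  shows "invertible (mat 1 - P)" and "pos_mat (matrix_inv (mat 1 - P))"
proof -
  obtain v where v: "pos_vec v" "P *v v = spec_rad P *\<^sub>R v"
    using perron_frobenius[OF P] by blast
  note nonneg = nonneg_if_one_minus_mult_nonneg[OF P(1) v \<open>spec_rad P < 1\<close>]
  have "x = 0" if "(mat 1 - P) *v x = 0" for x
  proof -
    have "(mat 1 - P) *v (- x) = 0"
      using that by (simp add: matrix_vector_mult_def sum_negf vec_eq_iff)
    then have "0 \<le> - x"
      using nonneg by (metis order_refl)
    moreover have "0 \<le> x"
      using that nonneg by (metis order_refl)
    ultimately show ?thesis
      by (metis neg_0_le_iff_le order.antisym)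
  qed
  then show inv: "invertible (mat 1 - P)"
    by (simp add: invertible_left_inverse matrix_left_invertible_ker)
  have "pos_vec (matrix_inv (mat 1 - P) *v axis j 1)" for j
  proof (rule pos_vec_if_subinvariant[OF P])
    let ?x = "matrix_inv (mat 1 - P) *v axis j 1"
    have x: "(mat 1 - P) *v ?x = axis j 1"
      by (simp add: matrix_vector_mul_assoc matrix_mul_matrix_inv(1)[OF inv])
    have "0 \<le> axis j (1 :: real)"
      by (simp add: less_eq_vec_def axis_def)
    then show "0 \<le> ?x"
      using nonneg x by metis
    show "?x \<noteq> 0"
      using x by auto
    have "P *v ?x = ?x - axis j 1"
      using x by (simp add: algebra_simps)
    then show "P *v ?x \<le> 1 *\<^sub>R ?x"
      by (simp add: less_eq_vec_def axis_def)
  qed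
  then show "pos_mat (matrix_inv (mat 1 - P))"
    by (simp add: pos_mat_def pos_vec_def matrix_vector_mult_basis column_def)
qed

section \<open>The resolvent along a ray\<close>

lemma filterlim_at_top_at_left_if_ge:
  fixes f :: "real \<Rightarrow> real"
  assumes "0 < a" and "0 < c" and "\<And>r. 0 < r \<Longrightarrow> r < a \<Longrightarrow> c * r / (a - r) \<le> f r"
  shows "filterlim f at_top (at_left a)"
proof (rule filterlim_at_top_mono)
  have "((\<lambda>r. a - r) \<longlongrightarrow> 0) (at_left a)"
    by (rule tendsto_eq_intros) auto
  then show "LIM r at_left a. c * r / (a - r) :> at_top"
    using assms(1,2)
    by (intro LIM_at_top_divide[where a = "c * a"] tendsto_intros eventually_at_leftI[of 0]) auto
  show "\<forall>\<^sub>F r in at_left a. c * r / (a - r) \<le> f r"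
    using assms(1,3) by (intro eventually_at_leftI[of 0]) auto
qed

locale resolvent_family =
  fixes P K :: "real^'n^'n" and \<rho> :: real
  assumes nonneg_P: "nonneg_mat P" and irreducible_P: "irreducible_mat P"
    and nonneg_K: "nonneg_mat K" and K_nonzero: "K \<noteq> 0"
    and radius_pos: "0 < \<rho>" and spec_rad_radius: "spec_rad (P + \<rho> *\<^sub>R K) = 1"
begin

definition resolvent :: "real \<Rightarrow> real^'n^'n" where
  "resolvent r = matrix_inv (mat 1 - P - r *\<^sub>R K)"

lemma nonneg_irreducible_ray:
  assumes "0 \<le> r"
  shows "nonneg_mat (P + r *\<^sub>R K)" and "irreducible_mat (P + r *\<^sub>R K)"
proof -
  show "nonneg_mat (P + r *\<^sub>R K)"
    using assms nonneg_P nonneg_K by (simp add: nonneg_mat_def)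
  have "P \<le> P + r *\<^sub>R K"
    using assms nonneg_K by (simp add: nonneg_mat_def less_eq_vec_def)
  then show "irreducible_mat (P + r *\<^sub>R K)"
    using irreducible_mat_mono nonneg_P irreducible_P by blast
qed

lemma spec_rad_lt_one:
  assumes "r \<in> {0..<\<rho>}"
  shows "spec_rad (P + r *\<^sub>R K) < 1"
proof -
  have "P + r *\<^sub>R K \<le> P + \<rho> *\<^sub>R K"
    using assms nonneg_K by (simp add: nonneg_mat_def less_eq_vec_def mult_right_mono)
  moreover have "P + r *\<^sub>R K \<noteq> P + \<rho> *\<^sub>R K"
    using assms K_nonzero by simp
  moreover have "0 \<le> r"
    using assms by simp
  ultimately show ?thesis
    using spec_rad_strict_mono[OF nonneg_irreducible_ray] spec_rad_radius by metis
qed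

lemma invertible_one_minus_ray:
  assumes "r \<in> {0..<\<rho>}"
  shows "invertible (mat 1 - P - r *\<^sub>R K)"
  using inverse_one_minus_pos(1)[OF nonneg_irreducible_ray spec_rad_lt_one[OF assms]] assms
  by (simp add: diff_diff_eq)

lemma pos_mat_resolvent:
  assumes "r \<in> {0..<\<rho>}"
  shows "pos_mat (resolvent r)"
  using inverse_one_minus_pos(2)[OF nonneg_irreducible_ray spec_rad_lt_one[OF assms]] assms
  by (simp add: resolvent_def diff_diff_eq)

lemma resolvent_diff:
  assumes "r \<in> {0..<\<rho>}" and "s \<in> {0..<\<rho>}"
  shows "resolvent s - resolvent r = (s - r) *\<^sub>R (resolvent s ** K ** resolvent r)"
proof -
  have "(mat 1 - P - r *\<^sub>R K) - (mat 1 - P - s *\<^sub>R K) = (s - r) *\<^sub>R K"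
    by (simp add: algebra_simps)
  then show ?thesis
    using matrix_inv_diff[OF invertible_one_minus_ray[OF assms(1)]
        invertible_one_minus_ray[OF assms(2)]]
    by (simp add: resolvent_def matrix_scalar_ac scalar_matrix_assoc)
qed

lemma pos_mat_resolvent_diff:
  assumes "0 \<le> r" and "r < s" and "s < \<rho>"
  shows "pos_mat (resolvent s - resolvent r)"
proof -
  have "pos_mat (resolvent s ** K ** resolvent r)"
    using assms by (intro pos_mat_mult_mult nonneg_K K_nonzero pos_mat_resolvent) auto
  then show ?thesis
    using assms resolvent_diff[of r s] by (simp add: pos_mat_def)
qed

lemma continuous_on_resolvent: "continuous_on {0..<\<rho>} resolvent"
proof -
  have "continuous_on {0..<\<rho>} (\<lambda>r. mat 1 - P - r *\<^sub>R K)"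
    by (intro continuous_intros)
  moreover have "(\<lambda>r. mat 1 - P - r *\<^sub>R K) ` {0..<\<rho>} \<subseteq> {X. invertible X}"
    using invertible_one_minus_ray by blast
  ultimately show ?thesis
    unfolding resolvent_def by (rule continuous_on_compose2[OF continuous_on_matrix_inv])
qed

lemma resolvent_blow_up:
  assumes "0 \<le> y" and "y \<noteq> 0"
  obtains c where "0 < c"
    and "\<And>r. r \<in> {0..<\<rho>} \<Longrightarrow> (c * r / (\<rho> - r)) *\<^sub>R 1 \<le> resolvent r *v y"
proof -
  obtain u where u: "pos_vec u" "(P + \<rho> *\<^sub>R K) *v u = u"
    using perron_frobenius[OF nonneg_irreducible_ray] radius_pos spec_rad_radius
    by (metis less_imp_le scaleR_one)
  \<comment> \<open>the Perron vector at the critical rate makes the blow-up explicit\<close>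
  have resolvent_K_u: "resolvent r *v (K *v u) = (1 / (\<rho> - r)) *\<^sub>R u" if r: "r \<in> {0..<\<rho>}" for r
  proof -
    have "(mat 1 - P - r *\<^sub>R K) *v u = (\<rho> - r) *\<^sub>R (K *v u)"
      using u(2) by (simp add: algebra_simps scaleR_matrix_vector_assoc)
    then have "u = (\<rho> - r) *\<^sub>R (resolvent r *v (K *v u))"
      using matrix_mul_matrix_inv(2)[OF invertible_one_minus_ray[OF r]]
      by (metis resolvent_def matrix_vector_mul_assoc matrix_vector_mul_lid matrix_vector_mult_scaleR)
    then have "(1 / (\<rho> - r)) *\<^sub>R u = (1 / (\<rho> - r)) *\<^sub>R (\<rho> - r) *\<^sub>R (resolvent r *v (K *v u))"
      by (rule arg_cong)
    then show ?thesis
      using r by simp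
  qed
  define z where "z = resolvent 0 *v y"
  have "pos_vec z"
    unfolding z_def using radius_pos assms
    by (intro pos_mat_mult_vec pos_mat_resolvent) auto
  then obtain \<beta> where \<beta>: "0 < \<beta>" "\<beta> *\<^sub>R u \<le> z"
    using pos_vec_ge_scaled u(1) by blast
  obtain \<gamma> where \<gamma>: "0 < \<gamma>" "\<gamma> *\<^sub>R 1 \<le> u"
    using pos_vec_ge_scaled[OF u(1) pos_vec_one] by blast
  show ?thesis
  proof (rule that[of "\<beta> * \<gamma>"])
    fix r assume r: "r \<in> {0..<\<rho>}"
    have RK: "nonneg_mat (resolvent r ** K)"
      using r by (intro nonneg_mat_mult pos_mat_imp_nonneg_mat nonneg_K pos_mat_resolvent)
    have "(\<beta> * \<gamma> * r / (\<rho> - r)) *\<^sub>R (1 :: real^'n) = (\<beta> * r / (\<rho> - r)) *\<^sub>R (\<gamma> *\<^sub>R 1)"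
      by (simp add: mult_ac)
    also have "\<dots> \<le> (\<beta> * r / (\<rho> - r)) *\<^sub>R u"
      using \<beta>(1) r by (intro scaleR_left_mono \<gamma>(2)) simp
    also have "\<dots> = r *\<^sub>R (resolvent r *v (K *v (\<beta> *\<^sub>R u)))"
      by (simp add: matrix_vector_mult_scaleR resolvent_K_u[OF r])
    also have "\<dots> \<le> r *\<^sub>R (resolvent r *v (K *v z))"
      using nonneg_mat_mult_vec_mono[OF RK \<beta>(2)] r
      by (simp add: scaleR_left_mono matrix_vector_mul_assoc)
    also have "\<dots> \<le> resolvent r *v y"
    proof -
      have "resolvent r = resolvent 0 + r *\<^sub>R (resolvent r ** K ** resolvent 0)"
        using resolvent_diff[of 0 r] r radius_pos by (simp add: algebra_simps)
      then have "resolvent r *v y = (resolvent 0 + r *\<^sub>R (resolvent r ** K ** resolvent 0)) *v y"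
        by (rule arg_cong)
      also have "\<dots> = z + r *\<^sub>R (resolvent r *v (K *v z))"
        by (simp add: z_def matrix_vector_mult_add_rdistrib scaleR_matrix_vector_assoc
            matrix_vector_mul_assoc matrix_mul_assoc)
      finally show ?thesis
        using \<open>pos_vec z\<close> by (simp add: pos_vec_imp_nonneg)
    qed
    finally show "(\<beta> * \<gamma> * r / (\<rho> - r)) *\<^sub>R 1 \<le> resolvent r *v y" .
  qed (simp add: \<beta>(1) \<gamma>(1))
qed

end

locale resolvent_output = resolvent_family P K \<rho> for P K :: "real^'n^'n" and \<rho> +
  fixes l :: "real^'n" and B :: "real^'n^'n"
  assumes pos_l: "pos_vec l" and nonneg_B: "nonneg_mat B"
    and B_column: "\<forall>j. \<exists>i. B $ i $ j \<noteq> 0"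
begin

definition M :: "real \<Rightarrow> real^'n^'n" where
  "M r = diag_mat l ** resolvent r ** B"

lemma pos_mat_M: "r \<in> {0..<\<rho>} \<Longrightarrow> pos_mat (M r)"
  unfolding M_def using pos_l nonneg_B B_column by (intro pos_mat_diag_mult_mult pos_mat_resolvent)

lemma pos_mat_M_diff:
  assumes "0 \<le> r" and "r < s" and "s < \<rho>"
  shows "pos_mat (M s - M r)"
proof -
  have "M s - M r = diag_mat l ** (resolvent s - resolvent r) ** B"
    by (simp add: M_def matrix_diff_ldistrib matrix_diff_rdistrib)
  then show ?thesis
    using assms pos_l nonneg_B B_column by (simp add: pos_mat_diag_mult_mult pos_mat_resolvent_diff)
qed

lemma continuous_on_M: "continuous_on {0..<\<rho>} M"
  unfolding M_def[abs_def]
  by (intro continuous_on_matrix_mult continuous_on_const continuous_on_resolvent)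

lemma strict_mono_on_spec_rad_M: "strict_mono_on {0..<\<rho>} (\<lambda>r. spec_rad (M r))"
proof (rule strict_mono_onI)
  show "spec_rad (M r) < spec_rad (M s)" if "r \<in> {0..<\<rho>}" "s \<in> {0..<\<rho>}" "r < s" for r s
    using that by (intro spec_rad_strict_mono_pos pos_mat_M pos_mat_M_diff) auto
qed

lemma spec_rad_M_tendsto_at_top: "filterlim (\<lambda>r. spec_rad (M r)) at_top (at_left \<rho>)"
proof -
  have "0 \<le> B *v 1"
    by (rule nonneg_mat_mult_vec_nonneg[OF nonneg_B pos_vec_imp_nonneg[OF pos_vec_one]])
  moreover have "B *v 1 \<noteq> 0"
    using B_column nonneg_mat_mult_vec_pos_component[OF nonneg_B, of 1]
    by (metis less_eq_vec_def less_irrefl one_index zero_index zero_le_one zero_neq_one)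
  ultimately obtain c where c: "0 < c"
    "\<And>r. r \<in> {0..<\<rho>} \<Longrightarrow> (c * r / (\<rho> - r)) *\<^sub>R 1 \<le> resolvent r *v (B *v 1)"
    using resolvent_blow_up by blast
  obtain \<gamma> where \<gamma>: "0 < \<gamma>" "\<gamma> *\<^sub>R 1 \<le> l"
    using pos_vec_ge_scaled[OF pos_l pos_vec_one] by blast
  show ?thesis
  proof (rule filterlim_at_top_at_left_if_ge[OF radius_pos, of "\<gamma> * c"])
    fix r assume r: "0 < r" "r < \<rho>"
    have "pos_mat (M r)"
      using r by (intro pos_mat_M) auto
    moreover have "\<gamma> * c * r / (\<rho> - r) \<le> (M r *v 1) $ i" for i
    proof -
      have "\<gamma> * (c * r / (\<rho> - r)) \<le> l $ i * (resolvent r *v (B *v 1)) $ i"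
        using c r \<gamma> pos_l by (intro mult_mono) (auto simp: less_eq_vec_def pos_vec_def less_imp_le)
      then show ?thesis
        by (simp add: M_def matrix_vector_mul_assoc[symmetric] diag_mat_mult_vec)
    qed
    ultimately show "\<gamma> * c * r / (\<rho> - r) \<le> spec_rad (M r)"
      by (intro spec_rad_ge[of _ 1])
        (auto simp: pos_mat_imp_nonneg_mat pos_mat_irreducible pos_vec_def less_eq_vec_def)
  qed (simp add: \<gamma>(1) c(1))
qed

end

theorem mainTheorem8:
  fixes A K B :: "real^'n^'n" and \<delta> l :: "real^'n" and rA :: real
  assumes n2: "CARD('n) \<ge> 2"
    and A_nn: "nonneg_mat A" and K_nn: "nonneg_mat K" and K_nz: "K \<noteq> 0"
    and \<delta>_rng: "\<forall>j. 0 < \<delta> $ j \<and> \<delta> $ j \<le> 1"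
    and l_pos: "\<forall>j. 0 < l $ j"
    and B_nn: "nonneg_mat B" and B_col: "\<forall>j. \<exists>i. B $ i $ j \<noteq> 0"
    and irr: "irreducible_mat (A + K ** diag_mat \<delta>)"
    and sr: "spec_rad (A + K ** diag_mat \<delta>) < 1"
    and rA_pos: "0 < rA"
    and rA_def: "spec_rad (A + K ** diag_mat \<delta> + rA *\<^sub>R K) = 1"
  shows "let At = A + K ** diag_mat \<delta>;
             M = (\<lambda>r. diag_mat l ** matrix_inv (mat 1 - At - r *\<^sub>R K) ** B)
         in (\<forall>r\<in>{0..<rA}. invertible (mat 1 - At - r *\<^sub>R K))
          \<and> (\<forall>r\<in>{0..<rA}. \<forall>i j. 0 < M r $ i $ j)
          \<and> continuous_on {0..<rA} M
          \<and> (\<forall>r1 r2. 0 \<le> r1 \<longrightarrow> r1 < r2 \<longrightarrow> r2 < rA \<longrightarrow>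
                (\<forall>i j. M r1 $ i $ j < M r2 $ i $ j))
          \<and> strict_mono_on {0..<rA} (\<lambda>r. spec_rad (M r))
          \<and> filterlim (\<lambda>r. spec_rad (M r)) at_top (at_left rA)"
proof -
  define At where "At = A + K ** diag_mat \<delta>"
  have "nonneg_mat (diag_mat \<delta>)"
    using \<delta>_rng by (simp add: nonneg_mat_def diag_mat_def less_imp_le)
  then have "nonneg_mat (K ** diag_mat \<delta>)"
    by (rule nonneg_mat_mult[OF K_nn])
  then have "nonneg_mat At"
    using A_nn by (simp add: At_def nonneg_mat_def)
  then interpret resolvent_output At K rA l B
    using irr K_nn K_nz rA_pos rA_def l_pos B_nn B_col
    by unfold_locales (simp_all add: At_def pos_vec_def)
  show ?thesis
    unfolding Let_def At_def[symmetric] resolvent_def[symmetric] M_def[symmetric]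
  proof (intro conjI ballI allI impI)
    show "invertible (mat 1 - At - r *\<^sub>R K)" if "r \<in> {0..<rA}" for r
      using that by (rule invertible_one_minus_ray)
    show "0 < M r $ i $ j" if "r \<in> {0..<rA}" for r i j
      using pos_mat_M[OF that] by (simp add: pos_mat_def)
    show "M r $ i $ j < M s $ i $ j" if "0 \<le> r" "r < s" "s < rA" for r s i j
      using pos_mat_M_diff[OF that] by (simp add: pos_mat_def)
  qed (fact continuous_on_M strict_mono_on_spec_rad_M spec_rad_M_tendsto_at_top)+
qed

end
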